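(* Suppose $G_1=G_2=\dots=G_n$. Let $\bar k=\min\{k\in\{1,\dots,n\}: k>\frac{U_1^-}{U_1^++U_1^-}\,n\}$. Then the qualified majority rule $f^{(\bar k)}$ solves program (OPT), i.e., it maximizes $W(f)$ over all SCFs $f$ that are anonymous and BIC. In particular, the maximal expected welfare in (OPT) is attained by an ordinal SCF.
   Context: There are $n\ge 2$ agents $N=\{1,\dots,n\}$ choosing between a Reform $R$ and the Status quo $S$. Agent $i$ gets utility $0$ if $S$ is chosen and utility $v_i\in\mathbb{R}$ if $R$ is chosen. Values are independent random variables $\tilde v_1,\dots,\tilde v_n$, $\tilde v_i\sim G_i$ (Borel probability distributions on $\mathbb{R}$, $G_i(0)=\Pr(\tilde v_i\le 0)$). Standing assumptions: all $\tilde v_i$ have the same support $V$ with $0\notin V$; $\mathbb{E}|\tilde v_i|<\infty$; $p_i:=1-G_i(0)\in(0,1)$. Let $U_i^+=\mathbb{E}(\tilde v_i\mid \tilde v_i>0)$ and $U_i^-=\mathbb{E}(|\tilde v_i|\mid\tilde v_i<0)$ (both positive and finite). An SCF is a Borel measurable $f:V^n\to[0,1]$ (probability of choosing $R$). $f$ is anonymous if $f(v)=f(\pi v)$ for every $v\in V^n$ and every permutation $\pi$ of $N$, where $\pi v=(v_{\pi(1)},\dots,v_{\pi(n)})$. $f$ is BIC if for every $i$ and all $v_i,v_i'\in V$: $v_i\,\mathbb{E}(f(v_i,\tilde v_{-i}))\ge v_i\,\mathbb{E}(f(v_i',\tilde v_{-i}))$ (expectation over $\tilde v_{-i}=(\tilde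 v_j)_{j\neq i}$). Expected welfare is $W(f)=\mathbb{E}\big(f(\tilde v)\sum_{i=1}^n\tilde v_i\big)$. Program (OPT): maximize $W(f)$ subject to $f$ being anonymous and BIC. For $v\in V^n$ let $\chi(v)=\{i\in N: v_i>0\}$. $f$ is ordinal if $f(v)=f(v')$ whenever $\chi(v)=\chi(v')$. For $k\in\{1,\dots,n\}$, the qualified majority rule $f^{(k)}$ is $f^{(k)}(v)=1$ if $|\chi(v)|\ge k$ and $f^{(k)}(v)=0$ otherwise. *)

theory Defs
  imports "HOL-Probability.Probability"
begin

text \<open>Agents are indexed by {..<n}; a profile is an extensional function
  v :: nat => real with v i in V for i < n (i.e. v in PiE {..<n} (\<lambda>_. V)).
  All G_i coincide with a single Borel probability measure G.\<close>

definition supp :: "real measure \<Rightarrow> real set" where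
  "supp G = {x. \<forall>e>0. measure G (ball x e) > 0}"

definition Uplus :: "real measure \<Rightarrow> real" where
  "Uplus G = (\<integral>x. x * indicator {0<..} x \<partial>G) / measure G {0<..}"

definition Uminus :: "real measure \<Rightarrow> real" where
  "Uminus G = (\<integral>x. \<bar>x\<bar> * indicator {..<0} x \<partial>G) / measure G {..<0}"

definition kbar :: "nat \<Rightarrow> real measure \<Rightarrow> nat" where
  "kbar n G = (LEAST k. 1 \<le> k \<and> k \<le> n \<and>
       real k > Uminus G / (Uplus G + Uminus G) * real n)"

definition SCF :: "nat \<Rightarrow> real set \<Rightarrow> ((nat \<Rightarrow> real) \<Rightarrow> real) \<Rightarrow> bool" where
  "SCF n V f \<longleftrightarrow> f \<in> borel_measurable (PiM {..<n} (\<lambda>_. borel)) \<and>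
     (\<forall>v\<in>PiE {..<n} (\<lambda>_. V). 0 \<le> f v \<and> f v \<le> 1)"

definition anonymous :: "nat \<Rightarrow> real set \<Rightarrow> ((nat \<Rightarrow> real) \<Rightarrow> real) \<Rightarrow> bool" where
  "anonymous n V f \<longleftrightarrow>
     (\<forall>v\<in>PiE {..<n} (\<lambda>_. V). \<forall>\<pi>. \<pi> permutes {..<n} \<longrightarrow> f (v \<circ> \<pi>) = f v)"

text \<open>Interim expected probability of R for agent i reporting a,
  expectation over the other agents' values.\<close>
definition interim :: "nat \<Rightarrow> real measure \<Rightarrow> ((nat \<Rightarrow> real) \<Rightarrow> real) \<Rightarrow> nat \<Rightarrow> real \<Rightarrow> real" where
  "interim n G f i a = (\<integral>w. f (w(i := a)) \<partial>PiM ({..<n} - {i}) (\<lambda>_. G))"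

definition BIC :: "nat \<Rightarrow> real measure \<Rightarrow> real set \<Rightarrow> ((nat \<Rightarrow> real) \<Rightarrow> real) \<Rightarrow> bool" where
  "BIC n G V f \<longleftrightarrow> (\<forall>i<n. \<forall>a\<in>V. \<forall>b\<in>V. a * interim n G f i a \<ge> a * interim n G f i b)"

definition welfare :: "nat \<Rightarrow> real measure \<Rightarrow> ((nat \<Rightarrow> real) \<Rightarrow> real) \<Rightarrow> real" where
  "welfare n G f = (\<integral>v. f v * (\<Sum>i<n. v i) \<partial>PiM {..<n} (\<lambda>_. G))"

definition chi :: "nat \<Rightarrow> (nat \<Rightarrow> real) \<Rightarrow> nat set" where
  "chi n v = {i\<in>{..<n}. v i > 0}"

definition ordinal :: "nat \<Rightarrow> real set \<Rightarrow> ((nat \<Rightarrow> real) \<Rightarrow> real) \<Rightarrow> bool" where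
  "ordinal n V f \<longleftrightarrow> (\<forall>v\<in>PiE {..<n} (\<lambda>_. V). \<forall>v'\<in>PiE {..<n} (\<lambda>_. V). chi n v = chi n v' \<longrightarrow> f v = f v')"

definition qmaj :: "nat \<Rightarrow> nat \<Rightarrow> (nat \<Rightarrow> real) \<Rightarrow> real" where
  "qmaj n k v = (if card (chi n v) \<ge> k then 1 else 0)"

end

theory Submission
  imports Defs
begin

(* Under BIC, a * (q(a) - q(b)) >= 0 for all a, b in the support forces each agent's interim
   probability q of the reform to be constant on positive and on negative values. Integrating
   against these constants, only the conditional means given the sign enter the welfare:
   E[f(v) v_i] = E[f(v) (U^+ [v_i > 0] - U^- [v_i < 0])], so W(f) = E[f(v) h(v)] with
   h(v) = |chi(v)| (U^+ + U^-) - n U^-. As 0 <= f <= 1, this is maximised pointwise by choosing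
   the reform exactly when h(v) > 0, i.e. when |chi(v)| >= kbar; that is the qualified majority
   rule, which is itself BIC, anonymous and ordinal. *)

lemma integrable_mult_unit_interval:
  fixes f g :: "'a \<Rightarrow> real"
  assumes g: "integrable M g" and f: "f \<in> borel_measurable M"
    and bounds: "AE x in M. 0 \<le> f x \<and> f x \<le> 1"
  shows "integrable M (\<lambda>x. f x * g x)"
proof (rule Bochner_Integration.integrable_bound[OF g])
  show "(\<lambda>x. f x * g x) \<in> borel_measurable M" using f g by measurable
  show "AE x in M. norm (f x * g x) \<le> norm (g x)"
    using bounds by eventually_elim (simp add: abs_mult mult_left_le_one_le)
qed

lemma borel_measurable_integral_fun_upd:
  fixes g :: "('i \<Rightarrow> 'a) \<Rightarrow> real"
  assumes G: "prob_space G" and i: "i \<in> I"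
    and g: "g \<in> borel_measurable (PiM I (\<lambda>_. G))"
  shows "(\<lambda>a. \<integral>w. g (w(i:=a)) \<partial>PiM (I - {i}) (\<lambda>_. G)) \<in> borel_measurable G"
proof -
  interpret PJ: prob_space "PiM (I - {i}) (\<lambda>_. G)" by (rule prob_space_PiM) (rule G)
  have "g \<in> borel_measurable (PiM (insert i (I - {i})) (\<lambda>_. G))"
    using g i by (simp add: insert_absorb)
  from measurable_compose[OF measurable_add_dim this]
  have "(\<lambda>(w, a). g (w(i:=a))) \<in> borel_measurable (PiM (I - {i}) (\<lambda>_. G) \<Otimes>\<^sub>M G)"
    by (simp add: case_prod_beta')
  then have "(\<lambda>(a, w). g (w(i:=a))) \<in> borel_measurable (G \<Otimes>\<^sub>M PiM (I - {i}) (\<lambda>_. G))"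
    by (subst measurable_pair_swap_iff) (simp add: case_prod_beta')
  then show ?thesis by (rule PJ.borel_measurable_lebesgue_integral[where f="\<lambda>a w. g (w(i:=a))", simplified])
qed

lemma integral_PiM_fun_upd:
  fixes g :: "('i \<Rightarrow> 'a) \<Rightarrow> real"
  assumes G: "prob_space G" and I: "finite I" "i \<in> I"
    and g: "integrable (PiM I (\<lambda>_. G)) g"
  shows "(\<integral>v. g v \<partial>PiM I (\<lambda>_. G)) = (\<integral>a. (\<integral>w. g (w(i:=a)) \<partial>PiM (I - {i}) (\<lambda>_. G)) \<partial>G)"
proof -
  define J where "J = I - {i}"
  have I_eq: "I = insert i J" and J: "finite J" "i \<notin> J" using I by (auto simp: J_def)
  interpret G: prob_space G by (rule G)
  interpret product_prob_space "\<lambda>_. G :: 'a measure" by (rule product_prob_spaceI) (rule G)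
  interpret PJ: prob_space "PiM J (\<lambda>_. G)" by (rule prob_space_PiM) (rule G)
  interpret pair_sigma_finite "PiM J (\<lambda>_. G)" G
    by (intro pair_sigma_finite.intro prob_space_imp_sigma_finite G PJ.prob_space_axioms)
  have g': "integrable (PiM (insert i J) (\<lambda>_. G)) g" using g I_eq by simp
  then have gm: "g \<in> borel_measurable (PiM (insert i J) (\<lambda>_. G))" by auto
  have upd: "(\<lambda>(w, a). g (w(i:=a))) \<in> borel_measurable (PiM J (\<lambda>_. G) \<Otimes>\<^sub>M G)"
    using measurable_compose[OF measurable_add_dim gm] by (simp add: case_prod_beta')
  have "(\<integral>\<^sup>+z. norm (case z of (w, a) \<Rightarrow> g (w(i:=a))) \<partial>(PiM J (\<lambda>_. G) \<Otimes>\<^sub>M G))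
      = (\<integral>\<^sup>+w. \<integral>\<^sup>+a. norm (g (w(i:=a))) \<partial>G \<partial>PiM J (\<lambda>_. G))"
    by (subst G.nn_integral_fst[symmetric]) (use upd in \<open>auto simp: case_prod_beta'\<close>)
  also have "\<dots> = (\<integral>\<^sup>+v. norm (g v) \<partial>PiM (insert i J) (\<lambda>_. G))"
    by (rule product_nn_integral_insert[symmetric, OF J]) (use gm in measurable)
  also have "\<dots> < \<infinity>" using g' by (simp add: integrable_iff_bounded)
  finally have upd_int: "integrable (PiM J (\<lambda>_. G) \<Otimes>\<^sub>M G) (\<lambda>(w, a). g (w(i:=a)))"
    using upd by (simp add: integrable_iff_bounded)
  have "(\<integral>v. g v \<partial>PiM (insert i J) (\<lambda>_. G)) = (\<integral>w. (\<integral>a. g (w(i:=a)) \<partial>G) \<partial>PiM J (\<lambda>_. G))"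
    by (rule product_integral_insert[OF J g'])
  also have "\<dots> = (\<integral>a. (\<integral>w. g (w(i:=a)) \<partial>PiM J (\<lambda>_. G)) \<partial>G)"
    by (rule Fubini_integral[symmetric]) (use upd_int in simp)
  finally show ?thesis unfolding J_def[symmetric] using I_eq by simp
qed

lemma AE_in_supp:
  fixes G :: "real measure"
  assumes G: "finite_measure G" and sets_G: "sets G = sets borel"
  shows "AE x in G. x \<in> supp G"
proof -
  interpret finite_measure G by (rule G)
  define B where "B = {qr \<in> \<rat> \<times> \<rat>. measure G (ball (fst qr) (snd qr)) = 0}"
  have "AE x in G. \<forall>qr\<in>B. x \<notin> ball (fst qr) (snd qr)"
  proof (rule AE_ball_countable')
    fix qr assume "qr \<in> B"
    then have "ball (fst qr) (snd qr) \<in> null_sets G"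
      by (auto simp: B_def null_sets_def emeasure_eq_measure sets_G)
    then show "AE x in G. x \<notin> ball (fst qr) (snd qr)" by (rule AE_not_in)
  next
    show "countable B" unfolding B_def by (intro countable_Collect countable_SIGMA countable_rat)
  qed
  then show ?thesis
  proof eventually_elim
    case (elim x)
    show "x \<in> supp G" unfolding supp_def
    proof (intro CollectI allI impI)
      fix e :: real assume e: "e > 0"
      show "measure G (ball x e) > 0"
      proof (rule ccontr)
        assume "\<not> measure G (ball x e) > 0"
        then have null: "measure G (ball x e) = 0" using measure_nonneg[of G "ball x e"] by linarith
        obtain q where q: "q \<in> \<rat>" "x < q" "q < x + e/4" using Rats_dense_in_real[of x "x + e/4"] e by auto
        obtain r where r: "r \<in> \<rat>" "e/4 < r" "r < e/2" using Rats_dense_in_real[of "e/4" "e/2"] e by auto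
        have "ball q r \<subseteq> ball x e" using q r by (auto simp: dist_real_def)
        then have "measure G (ball q r) = 0"
          using finite_measure_mono[of "ball q r" "ball x e"] null measure_nonneg[of G "ball q r"]
          by (simp add: sets_G)
        then have "(q, r) \<in> B" using q r by (simp add: B_def)
        moreover have "x \<in> ball q r" using q r by (simp add: dist_real_def)
        ultimately show False using elim by auto
      qed
    qed
  qed
qed

lemma card_chi_eq_sum: "real (card (chi n v)) = (\<Sum>i<n. indicator {0<..} (v i))"
proof -
  have "card (chi n v) = (\<Sum>i<n. indicator {i. 0 < v i} i :: nat)"
    using sum_indicator_eq_card[of "{..<n}" "{i. 0 < v i}"] by (simp add: chi_def Int_def)
  then show ?thesis by (simp add: indicator_def)
qed

lemma card_chi_le: "card (chi n v) \<le> n"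
  using card_mono[of "{..<n}" "chi n v"] by (auto simp: chi_def)

lemma qmaj_eq: "qmaj n k v = (if real k \<le> (\<Sum>i<n. indicator {0<..} (v i)) then 1 else 0)"
  by (simp add: qmaj_def flip: card_chi_eq_sum)

lemma qmaj_measurable: "qmaj n k \<in> borel_measurable (PiM {..<n} (\<lambda>_. borel))"
  unfolding qmaj_eq[abs_def] by measurable

lemma SCF_qmaj: "SCF n V (qmaj n k)"
  unfolding SCF_def using qmaj_measurable by (simp add: qmaj_def)

lemma anonymous_qmaj: "anonymous n V (qmaj n k)"
  unfolding anonymous_def
proof (intro ballI allI impI)
  fix v :: "nat \<Rightarrow> real" and \<pi> assume "\<pi> permutes {..<n}"
  then have "(\<Sum>i<n. indicator {0<..} (v i)) = (\<Sum>i<n. indicator {0<..} ((v \<circ> \<pi>) i) :: real)"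
    by (subst sum.permute) (simp_all add: comp_def)
  then show "qmaj n k (v \<circ> \<pi>) = qmaj n k v" by (simp add: qmaj_eq)
qed

lemma ordinal_qmaj: "ordinal n V (qmaj n k)"
  unfolding ordinal_def qmaj_def by simp

lemma qmaj_fun_upd_mono:
  assumes "0 < b \<Longrightarrow> 0 < a"
  shows "qmaj n k (w(i:=b)) \<le> qmaj n k (w(i:=a))"
proof -
  have "chi n (w(i:=b)) \<subseteq> chi n (w(i:=a))" using assms by (auto simp: chi_def)
  then have "card (chi n (w(i:=b))) \<le> card (chi n (w(i:=a)))"
    by (rule card_mono[rotated]) (simp add: chi_def)
  then show ?thesis by (simp add: qmaj_def)
qed

lemma interim_mono:
  fixes f :: "(nat \<Rightarrow> real) \<Rightarrow> real"
  assumes G: "prob_space G" and sets_G: "sets G = sets borel" and i: "i < n"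
    and f: "f \<in> borel_measurable (PiM {..<n} (\<lambda>_. borel))" and bounded: "\<And>v. \<bar>f v\<bar> \<le> B"
    and le: "\<And>w. f (w(i:=b)) \<le> f (w(i:=a))"
  shows "interim n G f i b \<le> interim n G f i a"
proof -
  interpret PJ: prob_space "PiM ({..<n} - {i}) (\<lambda>_. G)" by (rule prob_space_PiM) (rule G)
  have f_G: "f \<in> borel_measurable (PiM {..<n} (\<lambda>_. G))"
    using f sets_PiM_cong[of "{..<n}" "{..<n}" "\<lambda>_. G" "\<lambda>_. borel"] sets_G
    by (simp cong: measurable_cong_sets)
  have upd: "(\<lambda>w. (id w)(i := (\<lambda>_. c) w)) \<in> PiM ({..<n} - {i}) (\<lambda>_. G) \<rightarrow>\<^sub>M PiM {..<n} (\<lambda>_. G)" for c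
    by (rule measurable_fun_upd[of _ "{..<n} - {i}"]) (use i in \<open>auto simp: sets_eq_imp_space_eq[OF sets_G]\<close>)
  have "(\<lambda>w. f (w(i:=c))) \<in> borel_measurable (PiM ({..<n} - {i}) (\<lambda>_. G))" for c
    using measurable_compose[OF upd f_G] by simp
  then have "integrable (PiM ({..<n} - {i}) (\<lambda>_. G)) (\<lambda>w. f (w(i:=c)))" for c
    by (intro PJ.integrable_const_bound[where B=B]) (simp_all add: bounded)
  then show ?thesis unfolding interim_def by (intro integral_mono le)
qed

lemma BIC_qmaj:
  assumes "prob_space G" and "sets G = sets borel"
  shows "BIC n G V (qmaj n k)"
  unfolding BIC_def
proof (intro allI impI ballI)
  fix i a b assume i: "i < n"
  have mono: "interim n G (qmaj n k) i b \<le> interim n G (qmaj n k) i a" if "0 < b \<Longrightarrow> 0 < a" for a b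
  proof (rule interim_mono[OF assms i qmaj_measurable, where B=1])
    show "\<bar>qmaj n k v\<bar> \<le> 1" for v by (simp add: qmaj_def)
    show "qmaj n k (w(i:=b)) \<le> qmaj n k (w(i:=a))" for w by (rule qmaj_fun_upd_mono[OF that])
  qed
  show "a * interim n G (qmaj n k) i a \<ge> a * interim n G (qmaj n k) i b"
    by (cases "0 < a") (simp_all add: mono mult_left_mono mult_left_mono_neg)
qed

definition sign_mean :: "real measure \<Rightarrow> real \<Rightarrow> real" where
  "sign_mean G a = Uplus G * indicator {0<..} a - Uminus G * indicator {..<0} a"

definition sign_welfare :: "real measure \<Rightarrow> nat \<Rightarrow> (nat \<Rightarrow> real) \<Rightarrow> real" where
  "sign_welfare G n v = (\<Sum>i<n. sign_mean G (v i))"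

locale reform_model =
  fixes G :: "real measure" and n :: nat
  assumes n_pos: "0 < n" and prob_space_G: "prob_space G"
    and sets_G[measurable_cong]: "sets G = sets borel"
    and zero_notin_supp: "0 \<notin> supp G" and integrable_id: "integrable G (\<lambda>x. x)"
    and prob_pos: "0 < measure G {0<..}" and prob_pos_less_1: "measure G {0<..} < 1"
begin

sublocale G: prob_space G by (rule prob_space_G)

abbreviation Prof :: "(nat \<Rightarrow> real) measure" where
  "Prof \<equiv> PiM {..<n} (\<lambda>_. G)"

lemma space_G: "space G = UNIV"
  using sets_eq_imp_space_eq[OF sets_G] by simp

lemma AE_Prof_in_supp: "AE v in Prof. v \<in> PiE {..<n} (\<lambda>_. supp G)"
proof -
  have "AE v in Prof. \<forall>i\<in>{..<n}. v i \<in> supp G"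
  proof (rule AE_finite_allI)
    fix i assume "i \<in> {..<n}"
    then show "AE v in Prof. v i \<in> supp G"
      using AE_PiM_component[of "{..<n}" "\<lambda>_. G" i "\<lambda>x. x \<in> supp G"]
        AE_in_supp[OF G.finite_measure_axioms sets_G] prob_space_G by auto
  qed simp
  then show ?thesis
    using AE_space[of Prof] by eventually_elim (auto simp: space_PiM PiE_def)
qed

lemma supp_meets:
  assumes "A \<in> sets borel" and "0 < measure G A"
  shows "\<exists>a\<in>supp G. a \<in> A"
proof (rule ccontr)
  assume "\<not> ?thesis"
  then have "AE x in G. x \<in> A \<longleftrightarrow> x \<in> {}"
    using AE_in_supp[OF G.finite_measure_axioms sets_G] by (auto elim!: eventually_mono)
  then have "measure G A = measure G {}" by (rule measure_eq_AE) (simp_all add: assms sets_G)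
  then show False using assms by simp
qed

lemma prob_neg_pos: "0 < measure G {..<0}"
proof -
  obtain e :: real where "e > 0" and null: "measure G (ball 0 e) \<le> 0"
    using zero_notin_supp by (auto simp: supp_def not_less)
  then have "measure G {0} \<le> measure G (ball 0 e)"
    by (intro G.finite_measure_mono) (simp_all add: sets_G)
  then have "measure G {0} = 0" using null measure_nonneg[of G "{0}"] by linarith
  have "{..<0} \<union> ({0} \<union> {0<..}) = (UNIV :: real set)" by auto
  then have "1 = measure G ({..<0} \<union> ({0} \<union> {0<..}))"
    using G.prob_space space_G by simp
  also have "\<dots> = measure G {..<0} + (measure G {0} + measure G {0<..})"
    by (subst G.finite_measure_Union; (subst G.finite_measure_Union)?) (auto simp: sets_G)
  finally show ?thesis using \<open>measure G {0} = 0\<close> prob_pos_less_1 by simp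
qed

lemma integrable_mult_indicator_G: "S \<in> sets borel \<Longrightarrow> integrable G (\<lambda>x. x * indicator S x)"
  using integrable_mult_indicator[of S G "\<lambda>x. x", OF _ integrable_id] by (simp add: sets_G mult.commute)

lemma integrable_indicator_G: "S \<in> sets borel \<Longrightarrow> integrable G (indicator S :: real \<Rightarrow> real)"
  by (rule integrable_real_indicator) (simp_all add: sets_G G.emeasure_eq_measure)

lemma integral_pos_part: "(\<integral>x. x * indicator {0<..} x \<partial>G) = Uplus G * measure G {0<..}"
  using prob_pos by (simp add: Uplus_def)

lemma integral_neg_part: "(\<integral>x. x * indicator {..<0} x \<partial>G) = - (Uminus G * measure G {..<0})"
proof -
  have "(\<integral>x. \<bar>x\<bar> * indicator {..<0} x \<partial>G) = (\<integral>x. - (x * indicator {..<0} x) \<partial>G)"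
    by (rule Bochner_Integration.integral_cong) (auto simp: indicator_def)
  then show ?thesis using prob_neg_pos by (simp add: Uminus_def)
qed

lemma Uplus_pos: "0 < Uplus G"
proof -
  have nonneg: "AE x in G. 0 \<le> x * indicator {0<..} x" by (auto simp: indicator_def)
  have "(\<integral>x. x * indicator {0<..} x \<partial>G) \<noteq> 0"
  proof
    assume "(\<integral>x. x * indicator {0<..} x \<partial>G) = 0"
    then have "AE x in G. x * indicator {0<..} x = 0"
      using integral_nonneg_eq_0_iff_AE[OF integrable_mult_indicator_G nonneg] by simp
    then have "measure G {0<..} = measure G {}"
      by (intro measure_eq_AE) (auto elim!: eventually_mono simp: sets_G indicator_def)
    then show False using prob_pos by simp
  qed
  moreover have "0 \<le> (\<integral>x. x * indicator {0<..} x \<partial>G)" by (rule integral_nonneg_AE[OF nonneg])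
  ultimately show ?thesis using prob_pos by (simp add: Uplus_def)
qed

lemma Uminus_nonneg: "0 \<le> Uminus G"
  unfolding Uminus_def by (intro divide_nonneg_nonneg integral_nonneg) auto

lemma integrable_sign_mean: "integrable G (sign_mean G)"
  unfolding sign_mean_def[abs_def]
  by (intro Bochner_Integration.integrable_diff integrable_mult_right integrable_indicator_G) auto

lemma SCF_measurable: "SCF n (supp G) f \<Longrightarrow> f \<in> borel_measurable Prof"
  using sets_PiM_cong[of "{..<n}" "{..<n}" "\<lambda>_. G" "\<lambda>_. borel"] sets_G
  by (simp add: SCF_def cong: measurable_cong_sets)

lemma SCF_AE_bounds: "SCF n (supp G) f \<Longrightarrow> AE v in Prof. 0 \<le> f v \<and> f v \<le> 1"
  using AE_Prof_in_supp by (auto simp: SCF_def elim!: eventually_mono)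

lemma integrable_SCF_mult_coordinate:
  assumes f: "SCF n (supp G) f" and i: "i < n" and \<phi>: "integrable G \<phi>"
  shows "integrable Prof (\<lambda>v. f v * \<phi> (v i))"
proof (rule integrable_mult_unit_interval[OF _ SCF_measurable[OF f] SCF_AE_bounds[OF f]])
  have "integrable (distr Prof G (\<lambda>v. v i)) \<phi>"
    using distr_PiM_component[of "{..<n}" "\<lambda>_. G" i] prob_space_G i \<phi> by simp
  then show "integrable Prof (\<lambda>v. \<phi> (v i))"
    using integrable_distr_eq[of "\<lambda>v. v i" Prof G \<phi>] i \<phi> by auto
qed

lemma BIC_interim_AE_const:
  assumes BIC: "BIC n G (supp G) f" and i: "i < n" and A: "A \<in> {{0<..}, {..<0}}"
  shows "\<exists>c. AE a in G. a \<in> A \<longrightarrow> interim n G f i a = c"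
proof -
  obtain a\<^sub>0 where a\<^sub>0: "a\<^sub>0 \<in> supp G" "a\<^sub>0 \<in> A"
    using supp_meets[of A] A prob_pos prob_neg_pos by auto
  have "interim n G f i a = interim n G f i a\<^sub>0" if a: "a \<in> supp G" "a \<in> A" for a
  proof -
    have "a * interim n G f i a\<^sub>0 \<le> a * interim n G f i a"
      and "a\<^sub>0 * interim n G f i a \<le> a\<^sub>0 * interim n G f i a\<^sub>0"
      using BIC a a\<^sub>0 i by (auto simp: BIC_def)
    then show ?thesis using A a(2) a\<^sub>0(2) by (auto simp: mult_le_cancel_left)
  qed
  then show ?thesis
    using AE_in_supp[OF G.finite_measure_axioms sets_G] by (auto elim!: eventually_mono)
qed

lemma integral_SCF_mult_coordinate:
  assumes f: "SCF n (supp G) f" and i: "i < n"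
    and const: "AE a in G. a \<in> A \<longrightarrow> interim n G f i a = c"
    and \<phi>: "integrable G \<phi>" and \<phi>_vanishes: "\<And>x. x \<notin> A \<Longrightarrow> \<phi> x = 0"
  shows "(\<integral>v. f v * \<phi> (v i) \<partial>Prof) = c * (\<integral>x. \<phi> x \<partial>G)"
proof -
  have "(\<integral>v. f v * \<phi> (v i) \<partial>Prof) = (\<integral>a. interim n G f i a * \<phi> a \<partial>G)"
    using integral_PiM_fun_upd[OF prob_space_G _ _ integrable_SCF_mult_coordinate[OF f i \<phi>]] i
    by (simp add: interim_def)
  also have "\<dots> = (\<integral>a. c * \<phi> a \<partial>G)"
  proof (rule integral_cong_AE)
    have "interim n G f i \<in> borel_measurable G"
      using borel_measurable_integral_fun_upd[OF prob_space_G _ SCF_measurable[OF f], of i] i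
      by (simp add: interim_def[abs_def])
    then show "(\<lambda>a. interim n G f i a * \<phi> a) \<in> borel_measurable G" using \<phi> by measurable
    show "(\<lambda>a. c * \<phi> a) \<in> borel_measurable G" using \<phi> by measurable
    show "AE a in G. interim n G f i a * \<phi> a = c * \<phi> a"
      using const by eventually_elim (metis mult_zero_right \<phi>_vanishes)
  qed
  finally show ?thesis by simp
qed

lemma integral_SCF_mult_value:
  assumes f: "SCF n (supp G) f" and BIC: "BIC n G (supp G) f" and i: "i < n"
  shows "(\<integral>v. f v * v i \<partial>Prof) = (\<integral>v. f v * sign_mean G (v i) \<partial>Prof)"
proof -
  obtain c_pos where c_pos: "AE a in G. a \<in> {0<..} \<longrightarrow> interim n G f i a = c_pos"
    using BIC_interim_AE_const[OF BIC i] by blast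
  obtain c_neg where c_neg: "AE a in G. a \<in> {..<0} \<longrightarrow> interim n G f i a = c_neg"
    using BIC_interim_AE_const[OF BIC i] by blast
  have split: "(\<integral>v. f v * (\<phi> (v i) + \<psi> (v i)) \<partial>Prof)
      = (\<integral>v. f v * \<phi> (v i) \<partial>Prof) + (\<integral>v. f v * \<psi> (v i) \<partial>Prof)"
    if "integrable G \<phi>" "integrable G \<psi>" for \<phi> \<psi>
    using integrable_SCF_mult_coordinate[OF f i that(1)] integrable_SCF_mult_coordinate[OF f i that(2)]
    by (simp add: distrib_left)
  have "(\<integral>v. f v * v i \<partial>Prof)
      = (\<integral>v. f v * (v i * indicator {0<..} (v i) + v i * indicator {..<0} (v i)) \<partial>Prof)"
    by (rule Bochner_Integration.integral_cong) (auto simp: indicator_def)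
  also have "\<dots> = (\<integral>v. f v * (v i * indicator {0<..} (v i)) \<partial>Prof)
      + (\<integral>v. f v * (v i * indicator {..<0} (v i)) \<partial>Prof)"
    by (rule split) (simp_all add: integrable_mult_indicator_G)
  also have "\<dots> = c_pos * (Uplus G * measure G {0<..}) - c_neg * (Uminus G * measure G {..<0})"
    using integral_SCF_mult_coordinate[OF f i c_pos integrable_mult_indicator_G]
      integral_SCF_mult_coordinate[OF f i c_neg integrable_mult_indicator_G]
    by (simp add: integral_pos_part integral_neg_part)
  also have "\<dots> = (\<integral>v. f v * (Uplus G * indicator {0<..} (v i)) \<partial>Prof)
      + (\<integral>v. f v * (- Uminus G * indicator {..<0} (v i)) \<partial>Prof)"
    using integral_SCF_mult_coordinate[OF f i c_pos, of "\<lambda>x. Uplus G * indicator {0<..} x"]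
      integral_SCF_mult_coordinate[OF f i c_neg, of "\<lambda>x. - Uminus G * indicator {..<0} x"]
    by (simp add: integrable_indicator_G)
  also have "\<dots> = (\<integral>v. f v * sign_mean G (v i) \<partial>Prof)"
    unfolding sign_mean_def by (subst split[symmetric]) (simp_all add: integrable_indicator_G)
  finally show ?thesis .
qed

lemma integrable_SCF_mult_sign_welfare:
  assumes "SCF n (supp G) f"
  shows "integrable Prof (\<lambda>v. f v * sign_welfare G n v)"
  unfolding sign_welfare_def sum_distrib_left
  by (intro Bochner_Integration.integrable_sum integrable_SCF_mult_coordinate[OF assms]
      integrable_sign_mean) simp

lemma welfare_BIC:
  assumes f: "SCF n (supp G) f" and BIC: "BIC n G (supp G) f"
  shows "welfare n G f = (\<integral>v. f v * sign_welfare G n v \<partial>Prof)"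
proof -
  have "welfare n G f = (\<Sum>i<n. (\<integral>v. f v * v i \<partial>Prof))"
    unfolding welfare_def sum_distrib_left
    by (intro Bochner_Integration.integral_sum integrable_SCF_mult_coordinate[OF f]
        integrable_id) simp
  also have "\<dots> = (\<Sum>i<n. (\<integral>v. f v * sign_mean G (v i) \<partial>Prof))"
    by (intro sum.cong refl integral_SCF_mult_value[OF f BIC]) simp
  also have "\<dots> = (\<integral>v. f v * sign_welfare G n v \<partial>Prof)"
    unfolding sign_welfare_def sum_distrib_left
    by (intro Bochner_Integration.integral_sum[symmetric] integrable_SCF_mult_coordinate[OF f]
        integrable_sign_mean) simp
  finally show ?thesis .
qed

lemma sign_welfare_eq:
  assumes v: "v \<in> PiE {..<n} (\<lambda>_. supp G)"
  shows "sign_welfare G n v = card (chi n v) * (Uplus G + Uminus G) - n * Uminus G"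
proof -
  have "indicator {..<0} (v i) = 1 - (indicator {0<..} (v i) :: real)" if "i < n" for i
  proof -
    have "v i \<noteq> 0" using v zero_notin_supp that by (metis PiE_mem lessThan_iff)
    then show ?thesis by (auto simp: indicator_def)
  qed
  then have "sign_welfare G n v
      = Uplus G * (\<Sum>i<n. indicator {0<..} (v i)) - Uminus G * (real n - (\<Sum>i<n. indicator {0<..} (v i)))"
    by (simp add: sign_welfare_def sign_mean_def sum_subtractf flip: sum_distrib_left)
  then show ?thesis by (simp add: card_chi_eq_sum algebra_simps)
qed

lemma kbar_le_iff:
  assumes "m \<le> n"
  shows "kbar n G \<le> m \<longleftrightarrow> Uminus G / (Uplus G + Uminus G) * n < m"
proof -
  let ?T = "Uminus G / (Uplus G + Uminus G) * n"
  let ?P = "\<lambda>k. 1 \<le> k \<and> k \<le> n \<and> ?T < k"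
  have T_nonneg: "0 \<le> ?T" using Uplus_pos Uminus_nonneg by simp
  have "?T < 1 * real n"
    using Uplus_pos Uminus_nonneg n_pos by (intro mult_strict_right_mono) (simp_all add: divide_less_eq)
  then have "?P n" using n_pos by simp
  then have "?P (kbar n G)" unfolding kbar_def by (rule LeastI)
  moreover have "kbar n G \<le> m" if "?T < m"
    unfolding kbar_def by (rule Least_le) (use that T_nonneg assms in auto)
  ultimately show ?thesis by force
qed

lemma qmaj_kbar_eq:
  assumes v: "v \<in> PiE {..<n} (\<lambda>_. supp G)"
  shows "qmaj n (kbar n G) v = (if 0 < sign_welfare G n v then 1 else 0)"
proof -
  have "0 < Uplus G + Uminus G" using Uplus_pos Uminus_nonneg by simp
  then have "0 < sign_welfare G n v \<longleftrightarrow> Uminus G / (Uplus G + Uminus G) * n < card (chi n v)"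
    by (simp add: sign_welfare_eq[OF v] field_simps)
  then show ?thesis by (simp add: qmaj_def kbar_le_iff[OF card_chi_le])
qed

lemma welfare_le_welfare_qmaj_kbar:
  assumes f: "SCF n (supp G) f" and BIC: "BIC n G (supp G) f"
  shows "welfare n G f \<le> welfare n G (qmaj n (kbar n G))"
proof -
  have "AE v in Prof. f v * sign_welfare G n v \<le> qmaj n (kbar n G) v * sign_welfare G n v"
    using AE_Prof_in_supp SCF_AE_bounds[OF f]
  proof eventually_elim
    case (elim v)
    then show ?case
      by (cases "0 < sign_welfare G n v")
         (simp_all add: qmaj_kbar_eq mult_left_le_one_le mult_nonneg_nonpos)
  qed
  then have "(\<integral>v. f v * sign_welfare G n v \<partial>Prof)
      \<le> (\<integral>v. qmaj n (kbar n G) v * sign_welfare G n v \<partial>Prof)"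
    by (intro integral_mono_AE integrable_SCF_mult_sign_welfare f SCF_qmaj)
  then show ?thesis
    using welfare_BIC[OF f BIC] welfare_BIC[OF SCF_qmaj BIC_qmaj[OF prob_space_G sets_G]] by simp
qed

end

theorem proposition1:
  fixes G :: "real measure" and n :: nat
  assumes "n \<ge> 2"
    and "prob_space G"
    and "sets G = sets borel"
    and "0 \<notin> supp G"
    and "integrable G (\<lambda>x. x)"
    and "0 < measure G {0<..}" and "measure G {0<..} < 1"
  shows "SCF n (supp G) (qmaj n (kbar n G)) \<and> anonymous n (supp G) (qmaj n (kbar n G))
     \<and> BIC n G (supp G) (qmaj n (kbar n G))
     \<and> (\<forall>f. SCF n (supp G) f \<and> anonymous n (supp G) f \<and> BIC n G (supp G) f
            \<longrightarrow> welfare n G f \<le> welfare n G (qmaj n (kbar n G)))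
     \<and> ordinal n (supp G) (qmaj n (kbar n G))"
proof -
  have "reform_model G n" unfolding reform_model_def using assms by simp
  then interpret reform_model G n .
  show ?thesis
    using SCF_qmaj anonymous_qmaj BIC_qmaj[OF prob_space_G sets_G] ordinal_qmaj
      welfare_le_welfare_qmaj_kbar by blast
qed

end
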